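(* For integers $\lambda,k,\ell\ge0$ set \[ a_{\lambda,k,\ell} = 4^\lambda \sum_{2^\lambda\leq t<2^{\lambda+1}} \delta(\lambda+1-k,t)\,\delta(\lambda+1-\ell,t). \] Then the generating function $A(x,y,z) = \sum_{\lambda,k,\ell\ge 0} a_{\lambda,k,\ell} x^\lambda y^k z^\ell$ is given by \[ A(x,y,z) = \frac 1{(2-y)(2-z)} \cdot \frac{1+\frac {xz^2}{1-2xz(1+yz)}+\frac{xy^2}{1-2xy(1+yz)}} {1-x(1+yz)^2-\frac{xyz}{1-2xz(1+yz)}-\frac {xyz}{1-2xy(1+yz)}}. \] Furthermore, for every $\lambda\ge0$, \[ \sum_{2^\lambda\leq t<2^{\lambda+1}}c_t^2 = \frac 1{4^\lambda}\sum_{0\le k,\ell\leq \lambda+1}a_{\lambda,k,\ell} \quad\text{and}\quad \sum_{2^\lambda\leq t<2^{\lambda+1}}\tilde c_t^2 = \frac 1{4^\lambda}\sum_{0\le k,\ell\leq \lambda}a_{\lambda,k,\ell}, \] so that \[ \frac 1{2^\lambda} \sum_{2^\lambda\leq t<2^{\lambda+1}}c_t^2 = \frac 1{8^\lambda} \left[x^{\lambda} y^{\lambda+1} z^{\lambda+1}\right] \frac{A(x,y,z)}{(1-y)(1-z)} \] and \[ \frac 1{2^\lambda} \sum_{2^\lambda\leq t<2^{\lambda+1}}\tilde c_t^2 = \frac 1{8^\lambda} \left[x^{\lambda} y^{\lambda} z^{\lambda}\right] \frac{A(x,y,z)}{(1-y)(1-z)}. \]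
   Context: $s(n)$ denotes the binary sum of digits of $n\ge0$. For $k\in\mathbb{Z}$ and $t\ge0$, $\delta(k,t)$ is the asymptotic density of $\{n\ge0: s(n+t)-s(n)=k\}$ (it exists). For $t\ge0$, $c_t$ (resp. $\tilde c_t$) is the asymptotic density of $\{n\ge0: s(n+t)\ge s(n)\}$ (resp. $\{n\ge 0: s(n+t)>s(n)\}$). $[x^ay^bz^c]$ denotes extraction of the coefficient of $x^ay^bz^c$ in a formal power series. *)

theory Defs
  imports Complex_Main "HOL-Computational_Algebra.Formal_Power_Series"
begin

fun bsum :: "nat \<Rightarrow> nat" where
  "bsum n = (if n = 0 then 0 else n mod 2 + bsum (n div 2))"
declare bsum.simps[simp del]

definition adensity :: "nat set \<Rightarrow> real" where
  "adensity S = lim (\<lambda>N. real (card {n\<in>S. n < N}) / real N)"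

definition delta :: "int \<Rightarrow> nat \<Rightarrow> real" where
  "delta k t = adensity {n. int (bsum (n + t)) - int (bsum n) = k}"

definition cdens :: "nat \<Rightarrow> real" where
  "cdens t = adensity {n. bsum (n + t) \<ge> bsum n}"

definition ctdens :: "nat \<Rightarrow> real" where
  "ctdens t = adensity {n. bsum (n + t) > bsum n}"

definition acoef :: "nat \<Rightarrow> nat \<Rightarrow> nat \<Rightarrow> real" where
  "acoef lam k l = 4 ^ lam * (\<Sum>t\<in>{2^lam..<2^(lam+1)}.
      delta (int lam + 1 - int k) t * delta (int lam + 1 - int l) t)"

text \<open>Trivariate power series in x,y,z as nested series R[[z]][[y]][[x]]:
  coefficient of x^a y^b z^c of F is the c-th coefficient of the b-th coefficient of the a-th coefficient of F.\<close>
type_synonym fps3 = "real fps fps fps"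

definition gfA :: fps3 where
  "gfA = Abs_fps (\<lambda>lam. Abs_fps (\<lambda>k. Abs_fps (\<lambda>l. acoef lam k l)))"

definition Xv :: fps3 where "Xv = fps_X"
definition Yv :: fps3 where "Yv = fps_const fps_X"
definition Zv :: fps3 where "Zv = fps_const (fps_const fps_X)"

definition coeff3 :: "fps3 \<Rightarrow> nat \<Rightarrow> nat \<Rightarrow> nat \<Rightarrow> real" where
  "coeff3 F a b c = fps_nth (fps_nth (fps_nth F a) b) c"

end

theory Submission
  imports Defs
begin

text \<open>Splitting \<open>n\<close> by parity gives \<open>\<delta>(j, 2t) = \<delta>(j, t)\<close> and
  \<open>\<delta>(j, 2t+1) = (\<delta>(j-1, t) + \<delta>(j+1, t+1)) / 2\<close>.  Summing products of these over a dyadic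
  block and grouping the terms \<open>2u, 2u+1\<close> expresses the coefficients \<open>a\<close> of level \<open>\<lambda>+1\<close>
  through those of level \<open>\<lambda>\<close> and through companion coefficients built from the shifted
  products \<open>\<delta>(\<cdot>, t) \<delta>(\<cdot>, t+1)\<close>, which obey a similar recursion.  For the generating functions
  this is a linear system in \<open>A\<close>, the companion series \<open>C\<close> and its transpose; eliminating the latter two
  yields the closed form.  Finally \<open>c\<^sub>t\<close> is the sum of \<open>\<delta>(j, t)\<close> over \<open>0 \<le> j \<le> s(t) \<le> \<lambda>+1\<close>,
  so the mean square of \<open>c\<^sub>t\<close> over a block is a partial sum of the \<open>a\<close>, i.e. a coefficient of
  \<open>A / ((1-y)(1-z))\<close>.\<close>

unbundle fps_syntax

section \<open>Asymptotic densities\<close>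

definition has_density :: "nat set \<Rightarrow> real \<Rightarrow> bool" where
  "has_density S d \<longleftrightarrow> (\<lambda>N. real (card {n\<in>S. n < N}) / real N) \<longlonglongrightarrow> d"

lemma adensity_eqI: "has_density S d \<Longrightarrow> adensity S = d"
  unfolding has_density_def adensity_def by (rule limI)

lemma has_density_unique: "has_density S d \<Longrightarrow> has_density S e \<Longrightarrow> d = e"
  unfolding has_density_def using LIMSEQ_unique by blast

lemma has_density_empty: "has_density {} 0"
  unfolding has_density_def by simp

lemma has_density_UNIV: "has_density UNIV 1"
  unfolding has_density_def
proof (rule Lim_transform_eventually[OF tendsto_const])
  show "\<forall>\<^sub>F N in sequentially. 1 = real (card {n \<in> UNIV. n < N}) / real N"
    using eventually_gt_at_top[of "0::nat"] by eventually_elim simp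
qed

lemma has_density_UN:
  assumes "finite I" "\<And>i. i \<in> I \<Longrightarrow> has_density (F i) (d i)"
    and "\<And>i j. i \<in> I \<Longrightarrow> j \<in> I \<Longrightarrow> i \<noteq> j \<Longrightarrow> F i \<inter> F j = {}"
  shows "has_density (\<Union>i\<in>I. F i) (\<Sum>i\<in>I. d i)"
proof -
  have "card {n \<in> (\<Union>i\<in>I. F i). n < N} = (\<Sum>i\<in>I. card {n \<in> F i. n < N})" for N
  proof -
    have "{n \<in> (\<Union>i\<in>I. F i). n < N} = (\<Union>i\<in>I. {n \<in> F i. n < N})" by blast
    then show ?thesis using assms(1,3) by (simp add: card_UN_disjoint disjoint_iff)
  qed
  then show ?thesis
    using assms(2) unfolding has_density_def by (simp add: sum_divide_distrib tendsto_sum)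
qed

lemma card_below_even_odd:
  fixes N :: nat
  shows "card {n\<in>S. n < N} = card {m. 2*m \<in> S \<and> m < (N+1) div 2} + card {m. 2*m+1 \<in> S \<and> m < N div 2}"
proof -
  let ?E = "{m. 2*m \<in> S \<and> m < (N+1) div 2}" and ?O = "{m. 2*m+1 \<in> S \<and> m < N div 2}"
  have bound: "m < Suc N div 2 \<longleftrightarrow> 2*m < N" "m < N div 2 \<longleftrightarrow> 2*m+1 < N" for m
    by presburger+
  have split: "{n\<in>S. n < N} = (\<lambda>m. 2*m) ` ?E \<union> (\<lambda>m. 2*m+1) ` ?O"
  proof (intro set_eqI iffI)
    fix n assume n: "n \<in> {n\<in>S. n < N}"
    show "n \<in> (\<lambda>m. 2*m) ` ?E \<union> (\<lambda>m. 2*m+1) ` ?O"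
    proof (cases "even n")
      case True
      then obtain m where m: "n = 2*m" by (rule evenE)
      with n have "m \<in> ?E" by (simp add: bound)
      then have "n \<in> (\<lambda>m. 2*m) ` ?E" unfolding m by (rule imageI)
      then show ?thesis by (rule UnI1)
    next
      case False
      then obtain m where m: "n = 2*m+1" by (rule oddE)
      with n have "m \<in> ?O" by (simp add: bound)
      then have "n \<in> (\<lambda>m. 2*m+1) ` ?O" unfolding m by (rule imageI)
      then show ?thesis by (rule UnI2)
    qed
  next
    fix n assume "n \<in> (\<lambda>m. 2*m) ` ?E \<union> (\<lambda>m. 2*m+1) ` ?O"
    then show "n \<in> {n\<in>S. n < N}" by (auto simp: bound)
  qed
  have "card ((\<lambda>m. 2*m) ` ?E \<union> (\<lambda>m. 2*m+1) ` ?O) = card ((\<lambda>m. 2*m) ` ?E) + card ((\<lambda>m. 2*m+1) ` ?O)"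
  proof (rule card_Un_disjoint)
    show "finite ((\<lambda>m. 2*m) ` ?E)" "finite ((\<lambda>m. 2*m+1) ` ?O)"
      by simp_all
    show "(\<lambda>m. 2*m) ` ?E \<inter> (\<lambda>m. 2*m+1) ` ?O = {}"
    proof (rule equals0I)
      fix n assume "n \<in> (\<lambda>m. 2*m) ` ?E \<inter> (\<lambda>m. 2*m+1) ` ?O"
      then obtain a b where "n = 2*a" "n = 2*b+1" by (elim IntE imageE)
      then show False by presburger
    qed
  qed
  also have "\<dots> = card ?E + card ?O"
    by (simp add: card_image inj_on_def)
  finally show ?thesis unfolding split .
qed

lemma tendsto_div_2_over_n: "(\<lambda>N. real (N div 2) / real N) \<longlonglongrightarrow> 1/2"
proof -
  have "(\<lambda>N. real (N mod 2) / (2 * real N)) \<longlonglongrightarrow> 0"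
  proof (rule tendsto_sandwich[OF _ _ tendsto_const lim_const_over_n])
    show "\<forall>\<^sub>F N in sequentially. 0 \<le> real (N mod 2) / (2 * real N)" by simp
    show "\<forall>\<^sub>F N in sequentially. real (N mod 2) / (2 * real N) \<le> (1/2) / real N"
    proof (intro always_eventually allI)
      fix N :: nat
      have "real (N mod 2) / (2 * real N) \<le> 1 / (2 * real N)"
        by (rule divide_right_mono) auto
      then show "real (N mod 2) / (2 * real N) \<le> (1/2) / real N" by simp
    qed
  qed
  then have "(\<lambda>N. 1/2 - real (N mod 2) / (2 * real N)) \<longlonglongrightarrow> 1/2 - 0"
    by (intro tendsto_diff tendsto_const)
  moreover have "\<forall>\<^sub>F N in sequentially. 1/2 - real (N mod 2) / (2 * real N) = real (N div 2) / real N"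
  proof (rule eventually_mono[OF eventually_gt_at_top[of 0]])
    fix N :: nat assume "N > 0"
    moreover have "N = 2 * (N div 2) + N mod 2" by simp
    then have "real N = 2 * real (N div 2) + real (N mod 2)" by (metis of_nat_add of_nat_mult of_nat_numeral)
    ultimately show "1/2 - real (N mod 2) / (2 * real N) = real (N div 2) / real N"
      by (simp add: field_simps)
  qed
  ultimately show ?thesis by (simp add: Lim_transform_eventually)
qed

lemma tendsto_Suc_div_2_over_n: "(\<lambda>N. real ((N+1) div 2) / real N) \<longlonglongrightarrow> 1/2"
proof -
  have "(\<lambda>N. 1 - real (N div 2) / real N) \<longlonglongrightarrow> 1/2"
    using tendsto_diff[OF tendsto_const tendsto_div_2_over_n, of 1] by simp
  moreover have "\<forall>\<^sub>F N in sequentially. 1 - real (N div 2) / real N = real ((N+1) div 2) / real N"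
  proof (rule eventually_mono[OF eventually_gt_at_top[of 0]])
    fix N :: nat assume "N > 0"
    moreover have "(N+1) div 2 + N div 2 = N" by presburger
    then have "real ((N+1) div 2) = real N - real (N div 2)" by (metis add_diff_cancel_right' of_nat_add)
    ultimately show "1 - real (N div 2) / real N = real ((N+1) div 2) / real N"
      by (simp add: field_simps)
  qed
  ultimately show ?thesis by (rule Lim_transform_eventually)
qed

lemma has_density_even_odd:
  assumes even: "has_density {m. 2*m \<in> S} d0" and odd: "has_density {m. 2*m+1 \<in> S} d1"
  shows "has_density S ((d0 + d1) / 2)"
proof -
  define r where "r A N = real (card {n\<in>A. n < N}) / real N" for A N
  have up: "filterlim (\<lambda>N::nat. (N+1) div 2) at_top at_top"
    and down: "filterlim (\<lambda>N::nat. N div 2) at_top at_top"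
    using filterlim_compose[OF filterlim_at_top_div_const_nat filterlim_Suc]
      filterlim_at_top_div_const_nat by simp_all
  have "(\<lambda>N. r {m. 2*m \<in> S} ((N+1) div 2)) \<longlonglongrightarrow> d0" "(\<lambda>N. r {m. 2*m+1 \<in> S} (N div 2)) \<longlonglongrightarrow> d1"
    using filterlim_compose[OF even[unfolded has_density_def] up]
      filterlim_compose[OF odd[unfolded has_density_def] down] by (simp_all add: r_def)
  from tendsto_add[OF tendsto_mult[OF this(1) tendsto_Suc_div_2_over_n] tendsto_mult[OF this(2) tendsto_div_2_over_n]]
  have "(\<lambda>N. r {m. 2*m \<in> S} ((N+1) div 2) * (real ((N+1) div 2) / real N)
             + r {m. 2*m+1 \<in> S} (N div 2) * (real (N div 2) / real N)) \<longlonglongrightarrow> (d0 + d1) / 2"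
    by (simp add: add_divide_distrib)
  moreover have "\<forall>\<^sub>F N in sequentially. r {m. 2*m \<in> S} ((N+1) div 2) * (real ((N+1) div 2) / real N)
             + r {m. 2*m+1 \<in> S} (N div 2) * (real (N div 2) / real N) = r S N"
  proof (rule eventually_mono[OF eventually_ge_at_top[of 2]])
    fix N :: nat assume "N \<ge> 2"
    then have "N div 2 > 0" "(N+1) div 2 > 0" by simp_all
    then show "r {m. 2*m \<in> S} ((N+1) div 2) * (real ((N+1) div 2) / real N)
             + r {m. 2*m+1 \<in> S} (N div 2) * (real (N div 2) / real N) = r S N"
      unfolding r_def card_below_even_odd[of S N] by (simp add: field_simps)
  qed
  ultimately show ?thesis
    unfolding has_density_def r_def[symmetric] by (rule Lim_transform_eventually)
qed

lemma bsum_0 [simp]: "bsum 0 = 0"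
  by (simp add: bsum.simps)

lemma bsum_div_mod: "bsum n = bsum (n div 2) + n mod 2"
  by (cases "n = 0") (simp_all add: bsum.simps)

lemma bsum_double [simp]: "bsum (2 * m) = bsum m"
  using bsum_div_mod[of "2 * m"] by simp

lemma bsum_Suc_double [simp]: "bsum (Suc (2 * m)) = Suc (bsum m)"
  using bsum_div_mod[of "Suc (2 * m)"] by simp

lemma bsum_Suc_0 [simp]: "bsum (Suc 0) = 1"
  using bsum_Suc_double[of 0] by simp

lemma bsum_add_le: "bsum (a + b) \<le> bsum a + bsum b"
proof (induction "a + b" arbitrary: a b rule: less_induct)
  case less
  let ?h = "a div 2 + b div 2"
  have IH: "bsum ?h \<le> bsum (a div 2) + bsum (b div 2)" if "a + b > 0"
    using that by (intro less) auto
  consider "a + b = 0" | "odd a" "odd b" | "a + b > 0" "even a \<or> even b"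
    using neq0_conv by blast
  then show ?case
  proof cases
    case 2
    then have double: "a + b = 2 * (?h + 1)" and less_sum: "?h + 1 < a + b"
      by (auto elim!: oddE)
    have "bsum (a + b) = bsum (?h + 1)"
      by (simp only: double bsum_double)
    also have "\<dots> \<le> bsum ?h + 1"
      using less(1)[OF less_sum] by simp
    also have "\<dots> \<le> bsum a + bsum b"
      using 2 odd_pos[OF 2(1)] IH bsum_div_mod[of a] bsum_div_mod[of b] by (simp add: odd_iff_mod_2_eq_one)
    finally show ?thesis .
  next
    case 3
    then have "(a + b) div 2 = ?h" "(a + b) mod 2 = a mod 2 + b mod 2"
      by (auto elim!: evenE)
    with 3 IH show ?thesis
      using bsum_div_mod[of "a + b"] bsum_div_mod[of a] bsum_div_mod[of b] by simp
  qed simp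
qed

lemma bsum_le_if_less_pow2: "t < 2 ^ k \<Longrightarrow> bsum t \<le> k"
proof (induction k arbitrary: t)
  case (Suc k)
  then have "bsum (t div 2) \<le> k" by simp
  then show ?case using bsum_div_mod[of t] by simp
qed simp

lemma bsum_pow2 [simp]: "bsum (2 ^ k) = 1"
  by (induction k) simp_all

lemma bsum_le_if_le_pow2: "0 < k \<Longrightarrow> t \<le> 2 ^ k \<Longrightarrow> bsum t \<le> k"
  by (cases "t = 2 ^ k") (simp_all add: bsum_le_if_less_pow2)

section \<open>The densities \<open>\<delta>(j, t)\<close>\<close>

definition delta_set :: "int \<Rightarrow> nat \<Rightarrow> nat set" where
  "delta_set j t = {n. int (bsum (n + t)) - int (bsum n) = j}"

lemma delta_set_0: "delta_set j 0 = (if j = 0 then UNIV else {})"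
  by (auto simp: delta_set_def)

lemma delta_set_eq_empty:
  assumes "j > int (bsum t)"
  shows "delta_set j t = {}"
proof -
  have "int (bsum (n + t)) - int (bsum n) \<noteq> j" for n
    using bsum_add_le[of n t] assms by linarith
  then show ?thesis by (auto simp: delta_set_def)
qed

lemma even_part_delta_set_double: "{m. 2*m \<in> delta_set j (2*t)} = delta_set j t"
proof -
  have "bsum (2*m + 2*t) = bsum (m + t)" for m
    using bsum_double[of "m + t"] by (simp only: distrib_left)
  then show ?thesis by (simp add: delta_set_def)
qed

lemma odd_part_delta_set_double: "{m. 2*m+1 \<in> delta_set j (2*t)} = delta_set j t"
proof -
  have "bsum (Suc (2*m + 2*t)) = Suc (bsum (m + t))" for m
    using bsum_Suc_double[of "m + t"] by (simp add: algebra_simps)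
  then show ?thesis by (simp add: delta_set_def)
qed

lemma even_part_delta_set_Suc_double: "{m. 2*m \<in> delta_set j (2*t+1)} = delta_set (j-1) t"
proof -
  have "bsum (Suc (2*m + 2*t)) = Suc (bsum (m + t))" for m
    using bsum_Suc_double[of "m + t"] by (simp add: algebra_simps)
  then show ?thesis by (auto simp: delta_set_def)
qed

lemma odd_part_delta_set_Suc_double: "{m. 2*m+1 \<in> delta_set j (2*t+1)} = delta_set (j+1) (t+1)"
proof -
  have "bsum (Suc (Suc (2*m + 2*t))) = bsum (Suc (m + t))" for m
    using bsum_double[of "Suc (m + t)"] by (simp add: algebra_simps)
  then show ?thesis by (auto simp: delta_set_def)
qed

lemma has_density_delta_set_1: "has_density (delta_set (1 - int k) 1) (1 / 2^(k+1))"
proof (induction k)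
  case 0
  have "has_density (delta_set 1 1) ((1 + 0) / 2)"
    using has_density_UNIV has_density_empty delta_set_eq_empty[of 1 2]
    by (intro has_density_even_odd)
      (simp_all add: even_part_delta_set_Suc_double[of _ 0, simplified]
          odd_part_delta_set_Suc_double[of _ 0, simplified] delta_set_0)
  then show ?case by simp
next
  case (Suc k)
  have "has_density (delta_set (1 - int (Suc k)) 1) ((0 + 1 / 2^(k+1)) / 2)"
    using has_density_empty Suc.IH
    by (intro has_density_even_odd)
      (simp_all add: even_part_delta_set_Suc_double[of _ 0, simplified]
          odd_part_delta_set_Suc_double[of _ 0, simplified] delta_set_0)
  then show ?case by simp
qed

lemma ex_has_density_delta_set: "\<exists>d. has_density (delta_set j t) d"
proof (induction t arbitrary: j rule: less_induct)
  case (less t)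
  consider "t = 0" | "t = 1" | t' where "t = 2*t'" "t' > 0" | t' where "t = 2*t'+1" "t' > 0"
    by (cases "even t") (fastforce elim!: evenE oddE)+
  then show ?case
  proof cases
    case 1
    then show ?thesis using has_density_UNIV has_density_empty by (auto simp: delta_set_0)
  next
    case 2
    show ?thesis
    proof (cases "j \<le> 1")
      case True
      then have "j = 1 - int (nat (1 - j))" by simp
      then show ?thesis using 2 has_density_delta_set_1[of "nat (1 - j)"] by auto
    next
      case False
      then show ?thesis using 2 has_density_empty delta_set_eq_empty[of t j] by auto
    qed
  next
    case 3
    then obtain d where d: "has_density (delta_set j t') d" using less by fastforce
    have "has_density (delta_set j (2*t')) ((d + d) / 2)"
      by (rule has_density_even_odd)
        (simp_all only: even_part_delta_set_double odd_part_delta_set_double d)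
    then show ?thesis using 3 by blast
  next
    case 4
    then have "t' < t" "t' + 1 < t" by simp_all
    then obtain d e where d: "has_density (delta_set (j-1) t') d"
      and e: "has_density (delta_set (j+1) (t'+1)) e"
      using less by blast
    have "has_density (delta_set j (2*t'+1)) ((d + e) / 2)"
      by (rule has_density_even_odd)
        (simp_all only: even_part_delta_set_Suc_double odd_part_delta_set_Suc_double d e)
    then show ?thesis using 4 by blast
  qed
qed

lemma has_density_delta: "has_density (delta_set j t) (delta j t)"
proof -
  obtain d where d: "has_density (delta_set j t) d" using ex_has_density_delta_set by blast
  moreover have "delta j t = d"
    unfolding delta_def delta_set_def[symmetric] using d by (rule adensity_eqI)
  ultimately show ?thesis by simp
qed

lemma delta_double: "delta j (2*t) = delta j t"
proof -
  have "has_density (delta_set j (2*t)) ((delta j t + delta j t) / 2)"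
    by (rule has_density_even_odd)
      (simp_all only: even_part_delta_set_double odd_part_delta_set_double has_density_delta)
  then show ?thesis using has_density_unique[OF has_density_delta] by simp
qed

lemma delta_Suc_double: "delta j (2*t+1) = (delta (j-1) t + delta (j+1) (t+1)) / 2"
proof -
  have "has_density (delta_set j (2*t+1)) ((delta (j-1) t + delta (j+1) (t+1)) / 2)"
    by (rule has_density_even_odd)
      (simp_all only: even_part_delta_set_Suc_double odd_part_delta_set_Suc_double has_density_delta)
  then show ?thesis using has_density_unique[OF has_density_delta] by simp
qed

lemma delta_1: "delta (1 - int k) 1 = 1 / 2^(k+1)"
  using has_density_unique[OF has_density_delta has_density_delta_set_1] .

lemma delta_eq_0: "j > int (bsum t) \<Longrightarrow> delta j t = 0"
  using has_density_unique[OF has_density_delta] has_density_empty by (simp add: delta_set_eq_empty)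

lemma delta_pow2: "delta j (2^k) = delta j 1"
  by (induction k) (simp_all add: delta_double)

section \<open>Correlations over dyadic blocks\<close>

lemma sum_pairs:
  fixes a b :: nat
  assumes "a < b"
  shows "(\<Sum>t\<in>{2*a..<2*b}. f t) = (\<Sum>u\<in>{a..<b}. f (2*u) + f (2*u+1))"
proof -
  from assms have "{2*a..<2*b} = {2*a..Suc (2*(b-1))}" "{a..<b} = {a..b-1}" by auto
  then show ?thesis using sum.in_pairs[of f a "b-1"] by simp
qed

lemma sum_shift_periodic:
  fixes a b :: nat and f :: "nat \<Rightarrow> 'a::ab_group_add"
  assumes "a \<le> b" "f a = f b"
  shows "(\<Sum>u\<in>{a..<b}. f (u+1)) = (\<Sum>u\<in>{a..<b}. f u)"
proof -
  have "(\<Sum>u\<in>{a..<b}. f (u+1)) = sum f {Suc a..<Suc b}"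
    by (subst sum.shift_bounds_Suc_ivl) simp
  also have "\<dots> = sum f {a..<Suc b} - f a"
    using assms(1) by (subst sum.atLeast_Suc_lessThan[of a "Suc b"]) simp_all
  also have "\<dots> = sum f {a..<b}"
    using assms by (subst sum.atLeastLessThan_Suc) simp_all
  finally show ?thesis .
qed

definition dcorr :: "nat \<Rightarrow> int \<Rightarrow> int \<Rightarrow> real" where
  "dcorr lam p q = (\<Sum>t\<in>{2^lam..<2^(lam+1)}. delta p t * delta q t)"

text \<open>The odd-index recursion couples \<open>\<delta>(\<cdot>, t)\<close> with \<open>\<delta>(\<cdot>, t+1)\<close>, so the correlations
  \<open>dcorr\<close> of \<open>\<delta>\<close> with itself have to be studied together with the shifted ones.\<close>

definition dcorr_shift :: "nat \<Rightarrow> int \<Rightarrow> int \<Rightarrow> real" where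
  "dcorr_shift lam p q = (\<Sum>t\<in>{2^lam..<2^(lam+1)}. delta p t * delta q (t+1))"

lemma sum_block_Suc:
  fixes f :: "nat \<Rightarrow> 'a::comm_monoid_add"
  shows "(\<Sum>t\<in>{2^Suc lam..<2^(Suc lam+1)}. f t) = (\<Sum>u\<in>{2^lam..<2^(lam+1)}. f (2*u) + f (2*u+1))"
  using sum_pairs[of "2^lam" "2^(lam+1)" f] by simp

text \<open>Since \<open>\<delta>(j, 2^\<lambda>) = \<delta>(j, 2^(\<lambda>+1))\<close>, shifting a dyadic block by one does not change the sum.\<close>

lemma sum_block_shift:
  "(\<Sum>u\<in>{2^lam..<2^(lam+1)}. delta p (u+1) * delta q (u+1)) = dcorr lam p q"
  unfolding dcorr_def by (rule sum_shift_periodic) (simp_all add: delta_pow2 del: power_Suc)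

lemma dcorr_Suc: "dcorr (Suc lam) p q = dcorr lam p q +
   (dcorr lam (p-1) (q-1) + dcorr_shift lam (p-1) (q+1) + dcorr_shift lam (q-1) (p+1)
    + dcorr lam (p+1) (q+1)) / 4"
proof -
  have "dcorr (Suc lam) p q = (\<Sum>u\<in>{2^lam..<2^(lam+1)}. delta p u * delta q u +
      (delta (p-1) u * delta (q-1) u + delta (p-1) u * delta (q+1) (u+1)
       + delta (q-1) u * delta (p+1) (u+1) + delta (p+1) (u+1) * delta (q+1) (u+1)) / 4)"
    unfolding dcorr_def sum_block_Suc
    by (intro sum.cong refl) (simp only: delta_double delta_Suc_double, simp add: field_simps)
  also have "\<dots> = dcorr lam p q +
   (dcorr lam (p-1) (q-1) + dcorr_shift lam (p-1) (q+1) + dcorr_shift lam (q-1) (p+1)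
    + (\<Sum>u\<in>{2^lam..<2^(lam+1)}. delta (p+1) (u+1) * delta (q+1) (u+1))) / 4"
    unfolding dcorr_def dcorr_shift_def by (simp only: sum.distrib sum_divide_distrib[symmetric])
  also have "\<dots> = dcorr lam p q +
   (dcorr lam (p-1) (q-1) + dcorr_shift lam (p-1) (q+1) + dcorr_shift lam (q-1) (p+1)
    + dcorr lam (p+1) (q+1)) / 4"
    by (simp only: sum_block_shift)
  finally show ?thesis .
qed

lemma dcorr_shift_Suc: "dcorr_shift (Suc lam) p q =
   (dcorr lam p (q-1) + dcorr_shift lam p (q+1) + dcorr_shift lam (p-1) q + dcorr lam (p+1) q) / 2"
proof -
  have "dcorr_shift (Suc lam) p q = (\<Sum>u\<in>{2^lam..<2^(lam+1)}.
      (delta p u * delta (q-1) u + delta p u * delta (q+1) (u+1) + delta (p-1) u * delta q (u+1)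
       + delta (p+1) (u+1) * delta q (u+1)) / 2)"
  proof (unfold dcorr_shift_def sum_block_Suc, intro sum.cong refl)
    fix u
    have "delta q (2*u+1+1) = delta q (u+1)"
      using delta_double[of q "u+1"] by (simp add: algebra_simps)
    then show "delta p (2*u) * delta q (2*u+1) + delta p (2*u+1) * delta q (2*u+1+1) =
      (delta p u * delta (q-1) u + delta p u * delta (q+1) (u+1) + delta (p-1) u * delta q (u+1)
       + delta (p+1) (u+1) * delta q (u+1)) / 2"
      by (simp only: delta_double delta_Suc_double, simp add: field_simps)
  qed
  also have "\<dots> = (dcorr lam p (q-1) + dcorr_shift lam p (q+1) + dcorr_shift lam (p-1) q
      + (\<Sum>u\<in>{2^lam..<2^(lam+1)}. delta (p+1) (u+1) * delta q (u+1))) / 2"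
    unfolding dcorr_def dcorr_shift_def by (simp only: sum.distrib sum_divide_distrib[symmetric])
  also have "\<dots> = (dcorr lam p (q-1) + dcorr_shift lam p (q+1) + dcorr_shift lam (p-1) q
      + dcorr lam (p+1) q) / 2"
    by (simp only: sum_block_shift)
  finally show ?thesis .
qed

lemma delta_eq_0_in_block:
  assumes "t < 2^(lam+1)" "p > int lam + 1"
  shows "delta p t = 0" "delta p (t+1) = 0"
  using assms bsum_le_if_le_pow2[of "lam+1" t] bsum_le_if_le_pow2[of "lam+1" "t+1"]
  by (auto intro!: delta_eq_0)

lemma dcorr_eq_0:
  assumes "p > int lam + 1 \<or> q > int lam + 1"
  shows "dcorr lam p q = 0"
  unfolding dcorr_def
proof (intro sum.neutral ballI)
  fix t :: nat assume "t \<in> {2^lam..<2^(lam+1)}"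
  then have t: "t < 2^(lam+1)" by simp
  show "delta p t * delta q t = 0"
    using assms delta_eq_0_in_block[OF t, of p] delta_eq_0_in_block[OF t, of q] by auto
qed

lemma dcorr_shift_eq_0:
  assumes "p > int lam + 1 \<or> q > int lam + 1"
  shows "dcorr_shift lam p q = 0"
  unfolding dcorr_shift_def
proof (intro sum.neutral ballI)
  fix t :: nat assume "t \<in> {2^lam..<2^(lam+1)}"
  then have t: "t < 2^(lam+1)" by simp
  show "delta p t * delta q (t+1) = 0"
    using assms delta_eq_0_in_block[OF t, of p] delta_eq_0_in_block[OF t, of q] by auto
qed

definition ccoef :: "nat \<Rightarrow> nat \<Rightarrow> nat \<Rightarrow> real" where
  "ccoef lam k l = 4 ^ lam * dcorr_shift lam (int lam + 1 - int k) (int lam + 1 - int l)"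

lemma acoef_eq_dcorr: "acoef lam k l = 4 ^ lam * dcorr lam (int lam + 1 - int k) (int lam + 1 - int l)"
  unfolding acoef_def dcorr_def ..

lemma acoef_commute: "acoef lam k l = acoef lam l k"
  unfolding acoef_def by (simp add: mult.commute)

lemma scaled_dcorr_offset:
  "4^lam * dcorr lam (int lam + 1 - int k + int s) (int lam + 1 - int l + int r)
     = (if s \<le> k \<and> r \<le> l then acoef lam (k-s) (l-r) else 0)"
proof (cases "s \<le> k \<and> r \<le> l")
  case True
  then have "int lam + 1 - int k + int s = int lam + 1 - int (k - s)"
    "int lam + 1 - int l + int r = int lam + 1 - int (l - r)" by simp_all
  with True show ?thesis by (simp only: acoef_eq_dcorr simp_thms if_True)
qed (auto intro!: dcorr_eq_0)

lemma scaled_dcorr_shift_offset: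
  "4^lam * dcorr_shift lam (int lam + 1 - int k + int s) (int lam + 1 - int l + int r)
     = (if s \<le> k \<and> r \<le> l then ccoef lam (k-s) (l-r) else 0)"
proof (cases "s \<le> k \<and> r \<le> l")
  case True
  then have "int lam + 1 - int k + int s = int lam + 1 - int (k - s)"
    "int lam + 1 - int l + int r = int lam + 1 - int (l - r)" by simp_all
  with True show ?thesis by (simp only: ccoef_def simp_thms if_True)
qed (auto intro!: dcorr_shift_eq_0)

lemma acoef_Suc: "acoef (Suc lam) k l = acoef lam k l
   + 4 * (if 1 \<le> k \<and> 1 \<le> l then acoef lam (k-1) (l-1) else 0)
   + (if 2 \<le> k \<and> 2 \<le> l then acoef lam (k-2) (l-2) else 0)
   + (if 2 \<le> l then ccoef lam k (l-2) else 0)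
   + (if 2 \<le> k then ccoef lam l (k-2) else 0)"
proof -
  have "acoef (Suc lam) k l =
      4^lam * dcorr lam (int lam + 1 - int k + int 0) (int lam + 1 - int l + int 0)
    + 4 * (4^lam * dcorr lam (int lam + 1 - int k + int 1) (int lam + 1 - int l + int 1))
    + 4^lam * dcorr lam (int lam + 1 - int k + int 2) (int lam + 1 - int l + int 2)
    + 4^lam * dcorr_shift lam (int lam + 1 - int k + int 0) (int lam + 1 - int l + int 2)
    + 4^lam * dcorr_shift lam (int lam + 1 - int l + int 0) (int lam + 1 - int k + int 2)"
    \<comment> \<open>offsets written as \<open>int s\<close> so that the \<open>scaled_\<dots>_offset\<close> lemmas apply\<close>
    by (simp add: acoef_eq_dcorr dcorr_Suc algebra_simps)
  then show ?thesis unfolding scaled_dcorr_offset scaled_dcorr_shift_offset by simp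
qed

lemma ccoef_Suc: "ccoef (Suc lam) k l =
   2 * ((if 1 \<le> k then acoef lam (k-1) l else 0)
   + (if 1 \<le> k \<and> 2 \<le> l then ccoef lam (k-1) (l-2) else 0)
   + (if 1 \<le> l then ccoef lam k (l-1) else 0)
   + (if 2 \<le> k \<and> 1 \<le> l then acoef lam (k-2) (l-1) else 0))"
proof -
  have "ccoef (Suc lam) k l =
    2 * (4^lam * dcorr lam (int lam + 1 - int k + int 1) (int lam + 1 - int l + int 0)
    + 4^lam * dcorr_shift lam (int lam + 1 - int k + int 1) (int lam + 1 - int l + int 2)
    + 4^lam * dcorr_shift lam (int lam + 1 - int k + int 0) (int lam + 1 - int l + int 1)
    + 4^lam * dcorr lam (int lam + 1 - int k + int 2) (int lam + 1 - int l + int 1))"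
    by (simp add: ccoef_def dcorr_shift_Suc algebra_simps)
  then show ?thesis unfolding scaled_dcorr_offset scaled_dcorr_shift_offset by simp
qed

lemma acoef_0: "acoef 0 k l = 1 / 2^(k+1) * (1 / 2^(l+1))"
proof -
  have "{2^0..<2^(0+1)} = {1::nat}" by auto
  then show ?thesis using delta_1[of k] delta_1[of l] by (simp add: acoef_def)
qed

lemma ccoef_0: "ccoef 0 k l = 1 / 2^(k+1) * (1 / 2^(l+1))"
proof -
  have "{2^0..<2^(0+1)} = {1::nat}" by auto
  moreover have "delta (1 - int l) (1+1) = delta (1 - int l) 1"
    using delta_pow2[of _ 1] by (simp add: numeral_2_eq_2)
  ultimately show ?thesis using delta_1[of k] delta_1[of l] by (simp add: ccoef_def dcorr_shift_def)
qed

definition fps3_of :: "(nat \<Rightarrow> nat \<Rightarrow> nat \<Rightarrow> real) \<Rightarrow> fps3" where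
  "fps3_of f = Abs_fps (\<lambda>a. Abs_fps (\<lambda>b. Abs_fps (\<lambda>c. f a b c)))"

lemma coeff3_fps3_of [simp]: "coeff3 (fps3_of f) a b c = f a b c"
  by (simp add: fps3_of_def coeff3_def)

lemma fps3_eqI: "(\<And>a b c. coeff3 F a b c = coeff3 G a b c) \<Longrightarrow> F = G"
  unfolding coeff3_def by (intro fps_ext) blast

lemma coeff3_gfA [simp]: "coeff3 gfA a b c = acoef a b c"
  by (simp add: gfA_def coeff3_def)

lemma coeff3_add [simp]: "coeff3 (F + G) a b c = coeff3 F a b c + coeff3 G a b c"
  by (simp add: coeff3_def)

lemma coeff3_diff [simp]: "coeff3 (F - G) a b c = coeff3 F a b c - coeff3 G a b c"
  by (simp add: coeff3_def)

lemma coeff3_numeral_mult [simp]: "coeff3 (numeral w * F) a b c = numeral w * coeff3 F a b c"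
  by (simp add: coeff3_def numeral_fps_const)

lemma coeff3_one [simp]: "coeff3 1 a b c = (if a = 0 \<and> b = 0 \<and> c = 0 then 1 else 0)"
  by (simp add: coeff3_def)

lemma coeff3_Xv_mult [simp]: "coeff3 (Xv * F) a b c = (if a = 0 then 0 else coeff3 F (a - 1) b c)"
  by (simp add: coeff3_def Xv_def)

lemma coeff3_Yv_mult [simp]: "coeff3 (Yv * F) a b c = (if b = 0 then 0 else coeff3 F a (b - 1) c)"
  by (simp add: coeff3_def Yv_def)

lemma coeff3_Zv_mult [simp]: "coeff3 (Zv * F) a b c = (if c = 0 then 0 else coeff3 F a b (c - 1))"
  by (simp add: coeff3_def Zv_def)

lemma coeff3_numeral [simp]: "coeff3 (numeral w) a b c = (if a = 0 \<and> b = 0 \<and> c = 0 then numeral w else 0)"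
  using coeff3_numeral_mult[of w 1] by simp

lemma coeff3_Xv [simp]: "coeff3 Xv a b c = (if a = 1 \<and> b = 0 \<and> c = 0 then 1 else 0)"
  using coeff3_Xv_mult[of 1] by auto

lemma coeff3_Yv [simp]: "coeff3 Yv a b c = (if a = 0 \<and> b = 1 \<and> c = 0 then 1 else 0)"
  using coeff3_Yv_mult[of 1] by auto

lemma coeff3_Zv [simp]: "coeff3 Zv a b c = (if a = 0 \<and> b = 0 \<and> c = 1 then 1 else 0)"
  using coeff3_Zv_mult[of 1] by auto

lemma coeff3_mult_000 [simp]: "coeff3 (F * G) 0 0 0 = coeff3 F 0 0 0 * coeff3 G 0 0 0"
  by (simp add: coeff3_def)

lemma coeff3_fps_const [simp]: "coeff3 (fps_const G) a b c = (if a = 0 then G $ b $ c else 0)"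
  by (simp add: coeff3_def)

lemma fps_mult_inverse_eq_1:
  fixes f :: "'a::{ring_1,inverse} fps"
  assumes "f $ 0 * inverse (f $ 0) = 1"
  shows "f * inverse f = 1"
  using fps_right_inverse[OF assms] by (simp add: fps_inverse_def)

lemma fps3_mult_inverse_eq_1:
  assumes "coeff3 F 0 0 0 \<noteq> 0"
  shows "F * inverse F = 1"
proof (rule fps_mult_inverse_eq_1)
  have "F $ 0 $ 0 * inverse (F $ 0 $ 0) = 1"
    by (rule fps_mult_inverse_eq_1) (use assms in \<open>simp add: coeff3_def\<close>)
  then show "F $ 0 * inverse (F $ 0) = 1"
    by (rule fps_mult_inverse_eq_1)
qed

lemma fps3_inverse_eqI:
  assumes "F * G = 1" "coeff3 F 0 0 0 \<noteq> 0"
  shows "inverse F = G"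
proof -
  have "inverse F = inverse F * (F * G)" using assms(1) by simp
  also have "\<dots> = (F * inverse F) * G" by (simp only: mult_ac)
  also have "\<dots> = G" using fps3_mult_inverse_eq_1[OF assms(2)] by simp
  finally show ?thesis .
qed

section \<open>The generating function\<close>

definition gfA0 :: fps3 where
  "gfA0 = fps3_of (\<lambda>a b c. if a = 0 then 1 / 2^(b+1) * (1 / 2^(c+1)) else 0)"

lemma inverse_denominator_gfA0: "inverse ((2 - Yv) * (2 - Zv)) = gfA0"
proof (rule fps3_inverse_eqI)
  have expand: "(2 - Yv) * (2 - Zv) * F = 4 * F - 2 * (Yv * F) - 2 * (Zv * F) + Yv * (Zv * F)"
    for F :: fps3
    by (simp add: algebra_simps)
  show "(2 - Yv) * (2 - Zv) * gfA0 = 1"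
  proof (rule fps3_eqI)
    fix a b c
    show "coeff3 ((2 - Yv) * (2 - Zv) * gfA0) a b c = coeff3 1 a b c"
      unfolding expand by (cases b; cases c) (simp_all add: gfA0_def)
  qed
  show "coeff3 ((2 - Yv) * (2 - Zv)) 0 0 0 \<noteq> 0"
    by simp
qed

definition gfC :: fps3 where
  "gfC = fps3_of ccoef"

definition gfC_transpose :: fps3 where
  "gfC_transpose = fps3_of (\<lambda>a b c. ccoef a c b)"

lemma gfA_equation:
  "gfA = gfA0 + Xv * ((1 + Yv * Zv)^2 + 2 * Yv * Zv) * gfA + Xv * Zv^2 * gfC + Xv * Yv^2 * gfC_transpose"
proof -
  have "Xv * ((1 + Yv * Zv)^2 + 2 * Yv * Zv) * gfA + Xv * Zv^2 * gfC + Xv * Yv^2 * gfC_transpose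
      = Xv * (4 * (Yv * (Zv * gfA)) + gfA + Yv * (Yv * (Zv * (Zv * gfA)))
              + Zv * (Zv * gfC) + Yv * (Yv * gfC_transpose))"
    by (simp add: algebra_simps power2_eq_square)
  also have "gfA0 + \<dots> = gfA"
  proof (rule fps3_eqI)
    fix a b c
    show "coeff3 (gfA0 + \<dots>) a b c = coeff3 gfA a b c"
      by (cases a) (simp_all add: gfA0_def gfC_def gfC_transpose_def acoef_0 acoef_Suc
          numeral_2_eq_2 diff_Suc split: nat.split)
  qed
  finally show ?thesis by (simp add: add.assoc)
qed

lemma gfC_equation:
  "gfC = gfA0 + 2 * Xv * Yv * (1 + Yv * Zv) * gfA + 2 * Xv * Zv * (1 + Yv * Zv) * gfC"
proof -
  have "2 * Xv * Yv * (1 + Yv * Zv) * gfA + 2 * Xv * Zv * (1 + Yv * Zv) * gfC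
      = Xv * (2 * (Yv * gfA) + 2 * (Yv * (Zv * (Zv * gfC))) + 2 * (Zv * gfC)
              + 2 * (Yv * (Yv * (Zv * gfA))))"
    by (simp add: algebra_simps)
  also have "gfA0 + \<dots> = gfC"
  proof (rule fps3_eqI)
    fix a b c
    show "coeff3 (gfA0 + \<dots>) a b c = coeff3 gfC a b c"
      by (cases a) (simp_all add: gfA0_def gfC_def ccoef_0 ccoef_Suc
          numeral_2_eq_2 diff_Suc split: nat.split)
  qed
  finally show ?thesis by (simp add: add.assoc)
qed

lemma gfC_transpose_equation:
  "gfC_transpose = gfA0 + 2 * Xv * Zv * (1 + Yv * Zv) * gfA + 2 * Xv * Yv * (1 + Yv * Zv) * gfC_transpose"
proof -
  have "2 * Xv * Zv * (1 + Yv * Zv) * gfA + 2 * Xv * Yv * (1 + Yv * Zv) * gfC_transpose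
      = Xv * (2 * (Zv * gfA) + 2 * (Zv * (Yv * (Yv * gfC_transpose))) + 2 * (Yv * gfC_transpose)
              + 2 * (Zv * (Zv * (Yv * gfA))))"
    by (simp add: algebra_simps)
  also have "gfA0 + \<dots> = gfC_transpose"
  proof (rule fps3_eqI)
    fix a b c
    show "coeff3 (gfA0 + \<dots>) a b c = coeff3 gfC_transpose a b c"
      by (cases a) (simp_all add: gfA0_def gfC_transpose_def ccoef_0 ccoef_Suc acoef_commute
          numeral_2_eq_2 diff_Suc split: nat.split)
  qed
  finally show ?thesis by (simp add: add.assoc)
qed

lemma eliminate_companions:
  fixes x y z A C D B iu iv :: "'a::comm_ring_1"
  assumes eqA: "A = B + x * ((1 + y*z)^2 + 2*y*z) * A + x * z^2 * C + x * y^2 * D"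
    and eqC: "C = B + 2*x*y*(1 + y*z) * A + 2*x*z*(1 + y*z) * C"
    and eqD: "D = B + 2*x*z*(1 + y*z) * A + 2*x*y*(1 + y*z) * D"
    and iu: "(1 - 2*x*z*(1 + y*z)) * iu = 1"
    and iv: "(1 - 2*x*y*(1 + y*z)) * iv = 1"
  shows "A * (1 - x*(1 + y*z)^2 - x*y*z*iu - x*y*z*iv) = B * (1 + x*z^2*iu + x*y^2*iv)"
proof -
  define eA where "eA = A - (B + x * ((1 + y*z)^2 + 2*y*z) * A + x * z^2 * C + x * y^2 * D)"
  define eC where "eC = C - (B + 2*x*y*(1 + y*z) * A + 2*x*z*(1 + y*z) * C)"
  define eD where "eD = D - (B + 2*x*z*(1 + y*z) * A + 2*x*y*(1 + y*z) * D)"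
  define fu where "fu = (1 - 2*x*z*(1 + y*z)) * iu - 1"
  define fv where "fv = (1 - 2*x*y*(1 + y*z)) * iv - 1"
  have "eA = 0" "eC = 0" "eD = 0" "fu = 0" "fv = 0"
    unfolding eA_def eC_def eD_def fu_def fv_def
    using eqA eqC eqD iu iv by (simp_all only: right_minus_eq)
  \<comment> \<open>the defect of the claim is an explicit combination of the defects of the hypotheses\<close>
  moreover have "A * (1 - x*(1 + y*z)^2 - x*y*z*iu - x*y*z*iv) - B * (1 + x*z^2*iu + x*y^2*iv)
      = eA + x*z^2 * (iu*eC - C*fu) + x*y^2 * (iv*eD - D*fv) - x*y*z*A * (fu + fv)"
    unfolding eA_def eC_def eD_def fu_def fv_def by (simp add: algebra_simps power2_eq_square)
  ultimately show ?thesis by simp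
qed

lemma gfA_closed_form:
  "gfA = inverse ((2 - Yv) * (2 - Zv)) *
           ((1 + Xv * Zv^2 * inverse (1 - 2 * Xv * Zv * (1 + Yv * Zv))
               + Xv * Yv^2 * inverse (1 - 2 * Xv * Yv * (1 + Yv * Zv)))
            * inverse (1 - Xv * (1 + Yv * Zv)^2
               - Xv * Yv * Zv * inverse (1 - 2 * Xv * Zv * (1 + Yv * Zv))
               - Xv * Yv * Zv * inverse (1 - 2 * Xv * Yv * (1 + Yv * Zv))))"
  (is "gfA = _ * (?N * inverse ?D)")
proof -
  have eliminated: "gfA * ?D = gfA0 * ?N"
    by (rule eliminate_companions[OF gfA_equation gfC_equation gfC_transpose_equation])
      (simp_all add: fps3_mult_inverse_eq_1)
  have "?D * inverse ?D = 1"
    by (simp add: fps3_mult_inverse_eq_1)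
  then have "gfA = gfA * ?D * inverse ?D"
    by (simp only: mult.assoc[of gfA] mult_1_right)
  also have "\<dots> = gfA0 * ?N * inverse ?D"
    by (simp only: eliminated)
  also have "\<dots> = inverse ((2 - Yv) * (2 - Zv)) * (?N * inverse ?D)"
    by (simp only: inverse_denominator_gfA0 mult.assoc[of gfA0])
  finally show ?thesis .
qed

lemma inverse_partial_sum_denominator:
  "inverse ((1 - Yv) * (1 - Zv)) = fps_const (Abs_fps (\<lambda>b. Abs_fps (\<lambda>c. 1)))"
proof (rule fps3_inverse_eqI)
  have expand: "(1 - Yv) * (1 - Zv) * F = F - Yv * F - Zv * F + Yv * (Zv * F)" for F :: fps3
    by (simp add: algebra_simps)
  show "(1 - Yv) * (1 - Zv) * fps_const (Abs_fps (\<lambda>b. Abs_fps (\<lambda>c. 1))) = 1"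
  proof (rule fps3_eqI)
    fix a b c
    show "coeff3 ((1 - Yv) * (1 - Zv) * fps_const (Abs_fps (\<lambda>b. Abs_fps (\<lambda>c. 1)))) a b c = coeff3 1 a b c"
      unfolding expand by (cases b; cases c) simp_all
  qed
qed simp

lemma coeff3_gfA_partial_sums:
  "coeff3 (gfA * inverse ((1 - Yv) * (1 - Zv))) a b c = (\<Sum>k\<in>{0..b}. \<Sum>l\<in>{0..c}. acoef a k l)"
  unfolding inverse_partial_sum_denominator coeff3_def gfA_def
  by (simp only: fps_mult_right_const_nth) (simp add: fps_mult_nth fps_sum_nth)

section \<open>Mean squares of the densities \<open>c\<^sub>t\<close>\<close>

lemma has_density_delta_set_UN:
  assumes "finite I" "inj_on f I"
  shows "has_density (\<Union>i\<in>I. delta_set (f i) t) (\<Sum>i\<in>I. delta (f i) t)"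
  using assms by (intro has_density_UN has_density_delta) (auto simp: delta_set_def inj_on_def)

lemma cdens_eq_sum_delta:
  assumes "bsum t \<le> m"
  shows "cdens t = (\<Sum>i\<in>{0..m}. delta (int i) t)"
proof -
  have "{n. bsum (n + t) \<ge> bsum n} = (\<Union>i\<in>{0..m}. delta_set (int i) t)"
  proof (intro set_eqI iffI)
    fix n assume "n \<in> {n. bsum (n + t) \<ge> bsum n}"
    with assms bsum_add_le[of n t] have "n \<in> delta_set (int (bsum (n + t) - bsum n)) t"
      "bsum (n + t) - bsum n \<in> {0..m}"
      by (auto simp: delta_set_def)
    then show "n \<in> (\<Union>i\<in>{0..m}. delta_set (int i) t)" by blast
  qed (auto simp: delta_set_def)
  then show ?thesis
    unfolding cdens_def by (intro adensity_eqI) (simp add: has_density_delta_set_UN)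
qed

lemma ctdens_eq_sum_delta:
  assumes "bsum t \<le> m + 1"
  shows "ctdens t = (\<Sum>i\<in>{0..m}. delta (int i + 1) t)"
proof -
  have "{n. bsum (n + t) > bsum n} = (\<Union>i\<in>{0..m}. delta_set (int i + 1) t)"
  proof (intro set_eqI iffI)
    fix n assume "n \<in> {n. bsum (n + t) > bsum n}"
    with assms bsum_add_le[of n t] have "n \<in> delta_set (int (bsum (n + t) - bsum n - 1) + 1) t"
      "bsum (n + t) - bsum n - 1 \<in> {0..m}"
      by (auto simp: delta_set_def)
    then show "n \<in> (\<Union>i\<in>{0..m}. delta_set (int i + 1) t)" by blast
  qed (auto simp: delta_set_def)
  then show ?thesis
    unfolding ctdens_def by (intro adensity_eqI) (simp add: has_density_delta_set_UN inj_on_def)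
qed

lemma sum_square_sum:
  "(\<Sum>t\<in>T. (\<Sum>k\<in>K. h k t)^2) = (\<Sum>k\<in>K. \<Sum>l\<in>K. \<Sum>t\<in>T. h k t * h l t :: real)"
  by (simp add: power2_eq_square sum_product sum.swap[of _ T] sum.swap[of _ T K])

lemma sum_block_square:
  assumes "\<And>t. t < 2^(lam+1) \<Longrightarrow> g t = (\<Sum>k\<in>K. delta (int lam + 1 - int k) t)"
  shows "(\<Sum>t\<in>{2^lam..<2^(lam+1)}. (g t)^2) = 1 / 4^lam * (\<Sum>k\<in>K. \<Sum>l\<in>K. acoef lam k l)"
proof -
  have "(\<Sum>t\<in>{2^lam..<2^(lam+1)}. (g t)^2)
      = (\<Sum>t\<in>{2^lam..<2^(lam+1)}. (\<Sum>k\<in>K. delta (int lam + 1 - int k) t)^2)"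
    using assms by (intro sum.cong) simp_all
  then show ?thesis by (simp add: sum_square_sum acoef_def sum_distrib_left)
qed

lemma cdens_in_block:
  assumes "t < 2^(lam+1)"
  shows "cdens t = (\<Sum>k\<in>{0..lam+1}. delta (int lam + 1 - int k) t)"
proof -
  have "cdens t = (\<Sum>i\<in>{0..lam+1}. delta (int i) t)"
    using assms by (intro cdens_eq_sum_delta bsum_le_if_less_pow2)
  also have "\<dots> = (\<Sum>k\<in>{0..lam+1}. delta (int lam + 1 - int k) t)"
    by (subst sum.atLeastAtMost_rev) (intro sum.cong, auto simp: of_nat_diff)
  finally show ?thesis .
qed

lemma ctdens_in_block:
  assumes "t < 2^(lam+1)"
  shows "ctdens t = (\<Sum>k\<in>{0..lam}. delta (int lam + 1 - int k) t)"
proof -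
  have "ctdens t = (\<Sum>i\<in>{0..lam}. delta (int i + 1) t)"
    using assms by (intro ctdens_eq_sum_delta bsum_le_if_less_pow2)
  also have "\<dots> = (\<Sum>k\<in>{0..lam}. delta (int lam + 1 - int k) t)"
    by (subst sum.atLeastAtMost_rev) (intro sum.cong, auto simp: of_nat_diff algebra_simps)
  finally show ?thesis .
qed

lemma sum_cdens_square:
  "(\<Sum>t\<in>{2^lam..<2^(lam+1)}. (cdens t)^2)
     = 1 / 4^lam * (\<Sum>k\<in>{0..lam+1}. \<Sum>l\<in>{0..lam+1}. acoef lam k l)"
  by (rule sum_block_square) (rule cdens_in_block)

lemma sum_ctdens_square:
  "(\<Sum>t\<in>{2^lam..<2^(lam+1)}. (ctdens t)^2)
     = 1 / 4^lam * (\<Sum>k\<in>{0..lam}. \<Sum>l\<in>{0..lam}. acoef lam k l)"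
  by (rule sum_block_square) (rule ctdens_in_block)

theorem lemma4p2:
  shows "(gfA = inverse ((2 - Yv) * (2 - Zv)) *
           ((1 + Xv * Zv^2 * inverse (1 - 2 * Xv * Zv * (1 + Yv * Zv))
               + Xv * Yv^2 * inverse (1 - 2 * Xv * Yv * (1 + Yv * Zv)))
            * inverse (1 - Xv * (1 + Yv * Zv)^2
               - Xv * Yv * Zv * inverse (1 - 2 * Xv * Zv * (1 + Yv * Zv))
               - Xv * Yv * Zv * inverse (1 - 2 * Xv * Yv * (1 + Yv * Zv))))) \<and>
    (\<forall>lam::nat. (\<Sum>t\<in>{2^lam..<2^(lam+1)}. (cdens t)^2)
           = 1 / 4^lam * (\<Sum>k\<in>{0..lam+1}. \<Sum>l\<in>{0..lam+1}. acoef lam k l)) \<and>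
    (\<forall>lam::nat. (\<Sum>t\<in>{2^lam..<2^(lam+1)}. (ctdens t)^2)
           = 1 / 4^lam * (\<Sum>k\<in>{0..lam}. \<Sum>l\<in>{0..lam}. acoef lam k l)) \<and>
    (\<forall>lam::nat. 1 / 2^lam * (\<Sum>t\<in>{2^lam..<2^(lam+1)}. (cdens t)^2)
           = 1 / 8^lam * coeff3 (gfA * inverse ((1 - Yv) * (1 - Zv))) lam (lam+1) (lam+1)) \<and>
    (\<forall>lam::nat. 1 / 2^lam * (\<Sum>t\<in>{2^lam..<2^(lam+1)}. (ctdens t)^2)
           = 1 / 8^lam * coeff3 (gfA * inverse ((1 - Yv) * (1 - Zv))) lam lam lam)"
proof -
  have rescale: "1 / 2^lam * (1 / 4^lam * s) = 1 / 8^lam * s" for lam :: nat and s :: real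
    by (simp add: field_simps flip: power_mult_distrib)
  show ?thesis
    unfolding coeff3_gfA_partial_sums sum_cdens_square sum_ctdens_square rescale
    using gfA_closed_form by blast
qed

end
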